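(* Let $\mathcal{H}$ be a complex Hilbert space and let $T\in\mathbb{B}(\mathcal{H})$ have Cartesian decomposition $T=T_1+iT_2$, where $T_1=\frac{T+T^*}{2}$ and $T_2=\frac{T-T^*}{2i}$. Then \[ \|T\|^2+\max\big(\alpha(T),\alpha(T^* )\big)\le 2\,\omega^2(T)+D(T). \]
   Context: $\mathbb{B}(\mathcal{H})$ denotes the algebra of bounded linear operators on the complex Hilbert space $\mathcal{H}$. For $T\in\mathbb{B}(\mathcal{H})$: the numerical radius is $\omega(T)=\sup\{|\langle Tx,x\rangle| : x\in\mathcal{H},\ \|x\|=1\}$; $\|T\|$ is the operator norm; $\alpha(T)=\inf_{\|x\|=1}\|Tx\|^2$; and, with $T_1=\frac{T+T^*}{2}$, $T_2=\frac{T-T^*}{2i}$, $D(T)=2\min(\|T_1\|^2,\|T_2\|^2)=\min\left(\frac{\|T-T^*\|^2}{2},\frac{\|T+T^*\|^2}{2}\right)$. *)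

theory Defs
  imports "HOL-Analysis.Analysis"
begin

text \<open>The library has no complex inner product spaces, so we introduce a type class of
  complex Hilbert spaces: a (real) Banach space carrying a complex scalar multiplication
  that extends the real one, and a complex inner product (linear in the first argument,
  conjugate-symmetric) inducing the norm.\<close>

class complex_hilbert = banach +
  fixes scaleC :: "complex \<Rightarrow> 'a \<Rightarrow> 'a" (infixr \<open>*\<^sub>C\<close> 75)
    and cinner :: "'a \<Rightarrow> 'a \<Rightarrow> complex"
  assumes scaleC_add_right: "a *\<^sub>C (x + y) = a *\<^sub>C x + a *\<^sub>C y"
    and scaleC_add_left: "(a + b) *\<^sub>C x = a *\<^sub>C x + b *\<^sub>C x"
    and scaleC_scaleC: "a *\<^sub>C (b *\<^sub>C x) = (a * b) *\<^sub>C x"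
    and scaleC_one: "1 *\<^sub>C x = x"
    and scaleC_of_real: "complex_of_real r *\<^sub>C x = r *\<^sub>R x"
    and cinner_commute: "cinner x y = cnj (cinner y x)"
    and cinner_add_left: "cinner (x + y) z = cinner x z + cinner y z"
    and cinner_scaleC_left: "cinner (a *\<^sub>C x) y = a * cinner x y"
    and cinner_self_norm: "cinner x x = complex_of_real ((norm x)\<^sup>2)"

definition bounded_clinear_op :: "('a::complex_hilbert \<Rightarrow> 'a) \<Rightarrow> bool" where
  "bounded_clinear_op T \<longleftrightarrow>
     (\<forall>x y. T (x + y) = T x + T y) \<and> (\<forall>c x. T (c *\<^sub>C x) = c *\<^sub>C T x) \<and>
     (\<exists>K. \<forall>x. norm (T x) \<le> norm x * K)"

definition cadjoint :: "('a::complex_hilbert \<Rightarrow> 'a) \<Rightarrow> ('a \<Rightarrow> 'a)" where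
  "cadjoint T = (SOME S. \<forall>x y. cinner (T x) y = cinner x (S y))"

definition numrad :: "('a::complex_hilbert \<Rightarrow> 'a) \<Rightarrow> real" where
  "numrad T = Sup {cmod (cinner (T x) x) | x. norm x = 1}"

definition alpha_op :: "('a::complex_hilbert \<Rightarrow> 'a) \<Rightarrow> real" where
  "alpha_op T = Inf {(norm (T x))\<^sup>2 | x. norm x = 1}"

definition re_part :: "('a::complex_hilbert \<Rightarrow> 'a) \<Rightarrow> ('a \<Rightarrow> 'a)" where
  "re_part T = (\<lambda>x. (1/2) *\<^sub>C (T x + cadjoint T x))"

definition im_part :: "('a::complex_hilbert \<Rightarrow> 'a) \<Rightarrow> ('a \<Rightarrow> 'a)" where
  "im_part T = (\<lambda>x. (1 / (2 * \<i>)) *\<^sub>C (T x - cadjoint T x))"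

definition D_op :: "('a::complex_hilbert \<Rightarrow> 'a) \<Rightarrow> real" where
  "D_op T = 2 * min ((onorm (re_part T))\<^sup>2) ((onorm (im_part T))\<^sup>2)"

end

theory Submission
  imports Defs
begin

(* Let A be the adjoint of T and T1, T2 its real and imaginary parts.  The parallelogram law gives
   ||T x||^2 + ||A x||^2 = 2 (||T1 x||^2 + ||T2 x||^2).  By polarization ||T1|| <= w(T), and since
   T2 is the real part of -iT also ||T2|| <= w(T); hence ||T1||^2 + ||T2||^2 <= w(T)^2 + D(T)/2 and
   ||T x||^2 + ||A x||^2 <= (2 w(T)^2 + D(T)) ||x||^2.  Bounding one summand below by alpha and
   taking the supremum of the other over unit vectors yields the claim for alpha(A) and, as
   ||A|| = ||T||, for alpha(T).  The adjoint exists by the Riesz representation theorem, obtained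
   from nearest points in closed convex sets. *)

lemma scaleC_zero_left [simp]: "(0::complex) *\<^sub>C (x::'a::complex_hilbert) = 0"
  using scaleC_of_real[of 0 x] by simp

lemma scaleC_zero_right [simp]: "a *\<^sub>C (0::'a::complex_hilbert) = 0"
  using scaleC_add_right[of a 0 0] by simp

lemma scaleC_minus_left: "(- a) *\<^sub>C (x::'a::complex_hilbert) = - (a *\<^sub>C x)"
  using minus_unique[of "a *\<^sub>C x" "(- a) *\<^sub>C x"] scaleC_add_left[of a "- a" x] by simp

lemma scaleC_minus_right: "a *\<^sub>C (- x) = - (a *\<^sub>C (x::'a::complex_hilbert))"
  using minus_unique[of "a *\<^sub>C x" "a *\<^sub>C (- x)"] scaleC_add_right[of a x "- x"] by simp

lemma scaleC_diff_right: "a *\<^sub>C (x - y) = a *\<^sub>C x - a *\<^sub>C (y::'a::complex_hilbert)"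
  by (simp only: diff_conv_add_uminus scaleC_add_right scaleC_minus_right)

lemma cnj_cinner: "cnj (cinner y x) = cinner (x::'a::complex_hilbert) y"
  by (simp add: cinner_commute[of x y])

lemma cinner_add_right: "cinner x (y + z) = cinner x y + cinner (x::'a::complex_hilbert) z"
  by (metis cinner_add_left cnj_cinner complex_cnj_add)

lemma cinner_scaleC_right: "cinner x (a *\<^sub>C y) = cnj a * cinner (x::'a::complex_hilbert) y"
  by (metis cinner_scaleC_left cnj_cinner complex_cnj_mult)

lemma cinner_zero_left [simp]: "cinner (0::'a::complex_hilbert) y = 0"
  using cinner_scaleC_left[of 0 "0::'a" y] by simp

lemma cinner_zero_right [simp]: "cinner (x::'a::complex_hilbert) 0 = 0"
  by (metis cinner_zero_left cnj_cinner complex_cnj_zero)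

lemma cinner_diff_left: "cinner (x - y) z = cinner x z - cinner (y::'a::complex_hilbert) z"
  using cinner_add_left[of "x - y" y z] by simp

lemma cinner_diff_right: "cinner x (y - z) = cinner x y - cinner (x::'a::complex_hilbert) z"
  using cinner_add_right[of x "y - z" z] by simp

lemma cinner_scaleR_left: "cinner (r *\<^sub>R x) y = of_real r * cinner (x::'a::complex_hilbert) y"
  by (simp flip: scaleC_of_real add: cinner_scaleC_left)

lemma cinner_scaleR_right: "cinner x (r *\<^sub>R y) = of_real r * cinner (x::'a::complex_hilbert) y"
  by (simp flip: scaleC_of_real add: cinner_scaleC_right)

lemma power2_norm_eq_cinner: "(norm (x::'a::complex_hilbert))\<^sup>2 = Re (cinner x x)"
  by (simp add: cinner_self_norm)

lemma cinner_eq_cancel_left: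
  "(\<And>z. cinner z x = cinner z y) \<Longrightarrow> x = (y::'a::complex_hilbert)"
  by (metis cinner_diff_right cinner_self_norm diff_self diff_eq_diff_eq norm_eq_zero
      of_real_eq_0_iff zero_eq_power2)

lemma norm_add_sq:
  "(norm (x + y))\<^sup>2 = (norm x)\<^sup>2 + (norm y)\<^sup>2 + 2 * Re (cinner (x::'a::complex_hilbert) y)"
  using cinner_commute[of y x]
  by (simp add: power2_norm_eq_cinner cinner_add_left cinner_add_right)

lemma norm_diff_sq:
  "(norm (x - y))\<^sup>2 = (norm x)\<^sup>2 + (norm y)\<^sup>2 - 2 * Re (cinner (x::'a::complex_hilbert) y)"
  using cinner_commute[of y x]
  by (simp add: power2_norm_eq_cinner cinner_diff_left cinner_diff_right)

lemma parallelogram_law: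
  "(norm (x - y))\<^sup>2 = 2 * (norm x)\<^sup>2 + 2 * (norm y)\<^sup>2 - (norm (x + y))\<^sup>2"
  for x y :: "'a::complex_hilbert"
  using norm_add_sq[of x y] norm_diff_sq[of x y] by simp

lemma norm_scaleC: "norm (a *\<^sub>C x) = cmod a * norm (x::'a::complex_hilbert)"
proof -
  have "cinner (a *\<^sub>C x) (a *\<^sub>C x) = (a * cnj a) * cinner x x"
    by (simp add: cinner_scaleC_left cinner_scaleC_right)
  also have "a * cnj a = of_real ((cmod a)\<^sup>2)" by (simp add: complex_norm_square[symmetric])
  finally have "(norm (a *\<^sub>C x))\<^sup>2 = (cmod a * norm x)\<^sup>2"
    by (simp add: cinner_self_norm power_mult_distrib flip: of_real_mult of_real_power)
  then show ?thesis by (simp add: power2_eq_iff_nonneg)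
qed

lemma norm_cinner_le: "cmod (cinner x y) \<le> norm x * norm (y::'a::complex_hilbert)"
proof (cases "y = 0")
  case False
  define c where "c = cinner x y / of_real ((norm y)\<^sup>2)"
  define z where "z = x - c *\<^sub>C y"
  have ny: "norm y > 0" using False by simp
  have zy: "cinner z y = 0"
    using ny by (simp add: z_def c_def cinner_diff_left cinner_scaleC_left cinner_self_norm)
  have yz: "cinner y z = 0" using zy cinner_commute[of y z] by simp
  have "cinner x x = cinner (z + c *\<^sub>C y) (z + c *\<^sub>C y)" by (simp add: z_def)
  also have "\<dots> = cinner z z + c * cnj c * cinner y y"
    using zy yz
    by (simp add: cinner_add_left cinner_add_right cinner_scaleC_left cinner_scaleC_right)
  finally have "(norm x)\<^sup>2 = (norm z)\<^sup>2 + (cmod c)\<^sup>2 * (norm y)\<^sup>2"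
    by (simp add: cinner_self_norm complex_norm_square[symmetric]
        flip: of_real_mult of_real_add of_real_power)
  then have "(cmod c)\<^sup>2 * (norm y)\<^sup>2 \<le> (norm x)\<^sup>2" by simp
  moreover have "cmod c = cmod (cinner x y) / (norm y)\<^sup>2"
    by (simp add: c_def norm_divide norm_power)
  ultimately have "(cmod (cinner x y))\<^sup>2 \<le> (norm x * norm y)\<^sup>2"
    using ny by (simp add: power_divide field_simps power2_eq_square)
  then show ?thesis by (simp add: power2_le_iff_abs_le)
qed simp

lemma minimizing_sequence_Cauchy:
  fixes s :: "nat \<Rightarrow> 'a::complex_hilbert"
  assumes "convex S" and s: "\<And>k. s k \<in> S"
    and d: "\<And>m. m \<in> S \<Longrightarrow> d \<le> (norm (x - m))\<^sup>2"
    and sd: "\<And>k. (norm (x - s k))\<^sup>2 \<le> d + e k" and e: "e \<longlonglongrightarrow> 0"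
  shows "Cauchy s"
proof (rule CauchyI)
  have close: "(norm (s j - s k))\<^sup>2 \<le> 2 * e j + 2 * e k" for j k
  proof -
    define m where "m = (1/2) *\<^sub>R s j + (1/2) *\<^sub>R s k"
    have "m \<in> S" unfolding m_def by (rule convexD[OF \<open>convex S\<close> s s]) auto
    have "(x - s k) + (x - s j) = 2 *\<^sub>R (x - m)"
      by (simp add: m_def scaleR_diff_right scaleR_2 algebra_simps)
    then have "(norm (s j - s k))\<^sup>2 = 2 * (norm (x - s k))\<^sup>2 + 2 * (norm (x - s j))\<^sup>2
        - 4 * (norm (x - m))\<^sup>2"
      using parallelogram_law[of "x - s k" "x - s j"] by (simp add: power_mult_distrib)
    then show ?thesis using d[OF \<open>m \<in> S\<close>] sd[of j] sd[of k] by linarith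
  qed
  fix \<epsilon> :: real
  assume "0 < \<epsilon>"
  then have "eventually (\<lambda>k. e k < \<epsilon>\<^sup>2 / 4) sequentially"
    using e by (intro order_tendstoD(2)) auto
  then obtain M where M: "\<And>k. k \<ge> M \<Longrightarrow> e k < \<epsilon>\<^sup>2 / 4"
    unfolding eventually_sequentially by blast
  have "norm (s j - s k) < \<epsilon>" if "j \<ge> M" "k \<ge> M" for j k
  proof (rule power2_less_imp_less)
    show "(norm (s j - s k))\<^sup>2 < \<epsilon>\<^sup>2"
      using close[of j k] M[OF that(1)] M[OF that(2)] by linarith
  qed (use \<open>0 < \<epsilon>\<close> in simp)
  then show "\<exists>M. \<forall>j\<ge>M. \<forall>k\<ge>M. norm (s j - s k) < \<epsilon>" by blast
qed

lemma nearest_point_exists: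
  fixes x :: "'a::complex_hilbert"
  assumes "closed S" and "convex S" and "S \<noteq> {}"
  shows "\<exists>n\<in>S. \<forall>m\<in>S. norm (x - n) \<le> norm (x - m)"
proof -
  define d where "d = Inf {(norm (x - m))\<^sup>2 | m. m \<in> S}"
  have d_le: "d \<le> (norm (x - m))\<^sup>2" if "m \<in> S" for m
    unfolding d_def using that by (intro cInf_lower bdd_belowI[of _ 0]) auto
  have "\<exists>m\<in>S. (norm (x - m))\<^sup>2 < d + inverse (real (Suc k))" for k
    using cInf_lessD[of "{(norm (x - m))\<^sup>2 | m. m \<in> S}" "d + inverse (real (Suc k))"]
      \<open>S \<noteq> {}\<close> by (auto simp: d_def)
  then obtain s where s: "\<And>k. s k \<in> S"
    and sd: "\<And>k. (norm (x - s k))\<^sup>2 < d + inverse (real (Suc k))"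
    by metis
  have "Cauchy s"
    using minimizing_sequence_Cauchy[OF \<open>convex S\<close> s d_le less_imp_le[OF sd]
        LIMSEQ_inverse_real_of_nat] .
  then obtain n where lim: "s \<longlonglongrightarrow> n"
    using Cauchy_convergent_iff convergent_def by blast
  have "n \<in> S" using closed_sequentially[OF \<open>closed S\<close> _ lim] s by blast
  moreover have "(norm (x - n))\<^sup>2 \<le> d"
  proof (rule LIMSEQ_le)
    show "(\<lambda>k. (norm (x - s k))\<^sup>2) \<longlonglongrightarrow> (norm (x - n))\<^sup>2"
      by (intro tendsto_intros lim)
    show "(\<lambda>k. d + inverse (real (Suc k))) \<longlonglongrightarrow> d"
      using tendsto_add[OF tendsto_const LIMSEQ_inverse_real_of_nat, of d] by simp
    show "\<exists>N. \<forall>k\<ge>N. (norm (x - s k))\<^sup>2 \<le> d + inverse (real (Suc k))"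
      using sd less_imp_le by blast
  qed
  ultimately show ?thesis
    using d_le by (meson order_trans power2_le_imp_le norm_ge_zero)
qed

lemma nearest_point_orthogonal:
  fixes x n :: "'a::complex_hilbert"
  assumes n: "n \<in> S" and nearest: "\<And>m. m \<in> S \<Longrightarrow> norm (x - n) \<le> norm (x - m)"
    and add: "\<And>a b. a \<in> S \<Longrightarrow> b \<in> S \<Longrightarrow> a + b \<in> S"
    and scaleC: "\<And>c a. a \<in> S \<Longrightarrow> c *\<^sub>C a \<in> S"
    and "m \<in> S"
  shows "cinner (x - n) m = 0"
proof (rule ccontr)
  define c where "c = cinner (x - n) m"
  assume "c \<noteq> 0"
  then have "m \<noteq> 0" by (auto simp: c_def)
  define t where "t = c / of_real ((norm m)\<^sup>2)"
  have "cnj t * c = (c * cnj c) / of_real ((norm m)\<^sup>2)"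
    by (simp add: t_def)
  also have "c * cnj c = of_real ((cmod c)\<^sup>2)"
    by (rule complex_norm_square[symmetric])
  finally have Re_tc: "cnj t * c = of_real ((cmod c)\<^sup>2 / (norm m)\<^sup>2)" by simp
  have "cmod t = cmod c / (norm m)\<^sup>2"
    unfolding t_def by (simp add: norm_divide del: of_real_power)
  then have norm_tm: "(cmod t * norm m)\<^sup>2 = (cmod c)\<^sup>2 / (norm m)\<^sup>2"
    using \<open>m \<noteq> 0\<close> by (simp add: power2_eq_square)
  have "(norm ((x - n) - t *\<^sub>C m))\<^sup>2 < (norm (x - n))\<^sup>2"
    using \<open>c \<noteq> 0\<close> \<open>m \<noteq> 0\<close> Re_tc norm_tm
    by (simp add: norm_diff_sq norm_scaleC cinner_scaleC_right c_def)
  moreover have "norm (x - n) \<le> norm ((x - n) - t *\<^sub>C m)"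
    using nearest[OF add[OF n scaleC[OF \<open>m \<in> S\<close>]]] by (simp add: diff_diff_eq)
  ultimately show False
    by (simp add: power_mono leD)
qed

lemma riesz_representation:
  fixes f :: "'a::complex_hilbert \<Rightarrow> complex"
  assumes add: "\<And>x y. f (x + y) = f x + f y"
    and scaleC: "\<And>c x. f (c *\<^sub>C x) = c * f x"
    and bounded: "\<And>x. cmod (f x) \<le> norm x * K"
  shows "\<exists>z. \<forall>x. f x = cinner x z"
proof (cases "\<forall>x. f x = 0")
  case False
  then obtain x0 where "f x0 \<noteq> 0" by blast
  have "bounded_linear f"
    by (rule bounded_linear_intro[OF add _ bounded])
      (simp add: scaleC flip: scaleC_of_real add: scaleR_conv_of_real)
  then interpret f: bounded_linear f .
  define N where "N = {x. f x = 0}"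
  have "closed N"
    unfolding N_def by (intro closed_Collect_eq f.continuous_on continuous_on_id continuous_on_const)
  moreover have "convex N"
    by (auto simp: N_def convex_def f.add f.scale)
  moreover have "0 \<in> N" by (simp add: N_def)
  ultimately obtain n where "n \<in> N" and nearest: "\<And>m. m \<in> N \<Longrightarrow> norm (x0 - n) \<le> norm (x0 - m)"
    using nearest_point_exists[of N x0] by blast
  define u where "u = x0 - n"
  have fu: "f u = f x0" using \<open>n \<in> N\<close> by (simp add: u_def N_def f.diff)
  then have "u \<noteq> 0" using \<open>f x0 \<noteq> 0\<close> by auto
  have u_orth: "cinner u m = 0" if "f m = 0" for m
    unfolding u_def
    by (rule nearest_point_orthogonal[OF \<open>n \<in> N\<close> nearest])
      (use that in \<open>auto simp: N_def add scaleC\<close>)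
  have "f x = cinner x ((cnj (f u) / of_real ((norm u)\<^sup>2)) *\<^sub>C u)" for x
  proof -
    define v where "v = x - (f x / f u) *\<^sub>C u"
    have "f v = 0" using fu \<open>f x0 \<noteq> 0\<close> by (simp add: v_def f.diff scaleC)
    then have "cinner u v = 0" by (rule u_orth)
    then have "cinner v u = 0" by (metis cnj_cinner complex_cnj_zero)
    then have "cinner x u = (f x / f u) * of_real ((norm u)\<^sup>2)"
      by (simp add: v_def cinner_diff_left cinner_scaleC_left cinner_self_norm)
    then show ?thesis
      using \<open>u \<noteq> 0\<close> fu \<open>f x0 \<noteq> 0\<close> by (simp add: cinner_scaleC_right field_simps)
  qed
  then show ?thesis by blast
qed (auto intro: exI[of _ 0])

lemma bounded_clinear_op_add: "bounded_clinear_op T \<Longrightarrow> T (x + y) = T x + T y"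
  unfolding bounded_clinear_op_def by blast

lemma bounded_clinear_op_scaleC: "bounded_clinear_op T \<Longrightarrow> T (c *\<^sub>C x) = c *\<^sub>C T x"
  unfolding bounded_clinear_op_def by blast

lemma bounded_clinear_op_bounded:
  "bounded_clinear_op T \<Longrightarrow> \<exists>K. \<forall>x. norm (T x) \<le> norm x * K"
  unfolding bounded_clinear_op_def by blast

lemma bounded_clinear_op_imp_bounded_linear:
  "bounded_clinear_op T \<Longrightarrow> bounded_linear T"
  using bounded_clinear_op_bounded[of T]
  by (auto intro!: bounded_linear_intro simp: bounded_clinear_op_add bounded_clinear_op_scaleC
      simp flip: scaleC_of_real)

lemma cinner_cadjoint:
  assumes "bounded_clinear_op T"
  shows "cinner (T x) y = cinner x (cadjoint T y)"
proof -
  obtain K where K: "\<And>x. norm (T x) \<le> norm x * K"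
    using bounded_clinear_op_bounded[OF assms] by blast
  have "\<exists>z. \<forall>x. cinner (T x) y = cinner x z" for y
  proof (rule riesz_representation)
    show "cmod (cinner (T x) y) \<le> norm x * (K * norm y)" for x
      using norm_cinner_le[of "T x" y] mult_right_mono[OF K[of x] norm_ge_zero[of y]]
      by (simp add: mult.assoc)
  qed (simp_all add: assms bounded_clinear_op_add bounded_clinear_op_scaleC
      cinner_add_left cinner_scaleC_left)
  then have "\<exists>S. \<forall>x y. cinner (T x) y = cinner x (S y)"
    by metis
  from someI_ex[OF this] show ?thesis unfolding cadjoint_def by blast
qed

lemma cadjoint_eqI:
  assumes "bounded_clinear_op T" and "\<And>x y. cinner (T x) y = cinner x (S y)"
  shows "cadjoint T = S"
  by (rule ext, rule cinner_eq_cancel_left) (simp add: assms flip: cinner_cadjoint[OF assms(1)])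

lemma cinner_cadjoint_left:
  "bounded_clinear_op T \<Longrightarrow> cinner (cadjoint T x) y = cinner x (T y)"
  by (metis cinner_cadjoint cnj_cinner)

lemma norm_cadjoint_le:
  assumes T: "bounded_clinear_op T" and K: "\<And>x. norm (T x) \<le> K * norm x"
  shows "norm (cadjoint T y) \<le> K * norm y"
proof (cases "cadjoint T y = 0")
  case True
  have "0 \<le> K * norm y" using K[of y] by (meson norm_ge_zero order_trans)
  then show ?thesis using True by simp
next
  case False
  have "(norm (cadjoint T y))\<^sup>2 = Re (cinner (T (cadjoint T y)) y)"
    by (simp add: power2_norm_eq_cinner cinner_cadjoint[OF T])
  also have "\<dots> \<le> norm (T (cadjoint T y)) * norm y"
    using complex_Re_le_cmod norm_cinner_le order_trans by blast
  also have "\<dots> \<le> K * norm (cadjoint T y) * norm y"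
    by (intro mult_right_mono K) simp
  finally show ?thesis
    using False by (simp add: power2_eq_square mult.assoc)
qed

lemma bounded_clinear_op_cadjoint:
  assumes T: "bounded_clinear_op T"
  shows "bounded_clinear_op (cadjoint T)"
proof -
  obtain K where "\<And>x. norm (T x) \<le> norm x * K"
    using bounded_clinear_op_bounded[OF T] by blast
  then have "\<And>y. norm (cadjoint T y) \<le> norm y * K"
    using norm_cadjoint_le[OF T, of K] by (simp add: mult.commute)
  moreover have "cadjoint T (x + y) = cadjoint T x + cadjoint T y" for x y
    by (rule cinner_eq_cancel_left) (simp add: cinner_add_right flip: cinner_cadjoint[OF T])
  moreover have "cadjoint T (c *\<^sub>C x) = c *\<^sub>C cadjoint T x" for c x
    by (rule cinner_eq_cancel_left) (simp add: cinner_scaleC_right flip: cinner_cadjoint[OF T])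
  ultimately show ?thesis
    unfolding bounded_clinear_op_def by blast
qed

lemma cadjoint_cadjoint:
  assumes "bounded_clinear_op T"
  shows "cadjoint (cadjoint T) = T"
  by (rule cadjoint_eqI[OF bounded_clinear_op_cadjoint[OF assms]])
    (rule cinner_cadjoint_left[OF assms])

lemma onorm_cadjoint_le: "bounded_clinear_op T \<Longrightarrow> onorm (cadjoint T) \<le> onorm T"
  by (intro onorm_bound onorm_pos_le norm_cadjoint_le onorm
      bounded_clinear_op_imp_bounded_linear)

lemma onorm_cadjoint: "bounded_clinear_op T \<Longrightarrow> onorm (cadjoint T) = onorm T"
  using onorm_cadjoint_le[of T] onorm_cadjoint_le[of "cadjoint T"]
  by (simp add: bounded_clinear_op_cadjoint cadjoint_cadjoint)

lemma bounded_clinear_op_scale: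
  assumes "bounded_clinear_op T"
  shows "bounded_clinear_op (\<lambda>x. c *\<^sub>C T x)"
proof -
  obtain K where "\<And>x. norm (T x) \<le> norm x * K"
    using bounded_clinear_op_bounded[OF assms] by blast
  then have "norm (c *\<^sub>C T x) \<le> norm x * (cmod c * K)" for x
    using mult_left_mono[of "norm (T x)" "norm x * K" "cmod c"] by (simp add: norm_scaleC mult_ac)
  moreover have "c *\<^sub>C T (x + y) = c *\<^sub>C T x + c *\<^sub>C T y" for x y
    by (simp add: bounded_clinear_op_add[OF assms] scaleC_add_right)
  moreover have "c *\<^sub>C T (d *\<^sub>C x) = d *\<^sub>C (c *\<^sub>C T x)" for d x
    by (simp add: bounded_clinear_op_scaleC[OF assms] scaleC_scaleC mult.commute)
  ultimately show ?thesis
    unfolding bounded_clinear_op_def by blast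
qed

lemma cadjoint_scale:
  assumes "bounded_clinear_op T"
  shows "cadjoint (\<lambda>x. c *\<^sub>C T x) = (\<lambda>y. cnj c *\<^sub>C cadjoint T y)"
  by (rule cadjoint_eqI[OF bounded_clinear_op_scale[OF assms]])
    (simp add: cinner_scaleC_left cinner_scaleC_right cinner_cadjoint[OF assms])

lemma re_part_eq_scaleR: "re_part T x = (1/2) *\<^sub>R (T x + cadjoint T x)"
  unfolding re_part_def by (simp flip: scaleC_of_real)

lemma im_part_eq_re_part:
  assumes "bounded_clinear_op T"
  shows "im_part T = re_part (\<lambda>x. (- \<i>) *\<^sub>C T x)"
proof
  fix x
  have "1 / (2 * \<i>) = (1/2) * (- \<i>)" by (simp add: complex_eq_iff)
  then have "im_part T x = ((1/2) * (- \<i>)) *\<^sub>C T x - ((1/2) * (- \<i>)) *\<^sub>C cadjoint T x"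
    by (simp only: im_part_def scaleC_diff_right)
  also have "\<dots> = (1/2) *\<^sub>C ((- \<i>) *\<^sub>C T x + \<i> *\<^sub>C cadjoint T x)"
    by (simp add: scaleC_add_right scaleC_scaleC diff_conv_add_uminus flip: scaleC_minus_left)
  also have "\<dots> = re_part (\<lambda>x. (- \<i>) *\<^sub>C T x) x"
    by (simp add: re_part_def cadjoint_scale[OF assms])
  finally show "im_part T x = re_part (\<lambda>x. (- \<i>) *\<^sub>C T x) x" .
qed

lemma bounded_linear_re_part: "bounded_clinear_op T \<Longrightarrow> bounded_linear (re_part T)"
  unfolding re_part_eq_scaleR[abs_def]
  by (intro bounded_linear_const_scaleR bounded_linear_add bounded_clinear_op_imp_bounded_linear
      bounded_clinear_op_cadjoint)

lemma norm_cinner_le_numrad: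
  assumes "bounded_clinear_op T"
  shows "cmod (cinner (T x) x) \<le> numrad T * (norm x)\<^sup>2"
proof (cases "x = 0")
  case False
  interpret T: bounded_linear T by (rule bounded_clinear_op_imp_bounded_linear[OF assms])
  obtain K where K: "\<And>x. norm (T x) \<le> norm x * K"
    using bounded_clinear_op_bounded[OF assms] by blast
  have "bdd_above {cmod (cinner (T x) x) | x. norm x = 1}"
  proof (rule bdd_aboveI[of _ K])
    fix v
    assume "v \<in> {cmod (cinner (T x) x) | x. norm x = 1}"
    then obtain y where "v = cmod (cinner (T y) y)" and "norm y = 1" by blast
    then show "v \<le> K" using norm_cinner_le[of "T y" y] K[of y] by simp
  qed
  then have unit: "cmod (cinner (T u) u) \<le> numrad T" if "norm u = 1" for u
    unfolding numrad_def using that by (intro cSup_upper) auto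
  define u where "u = inverse (norm x) *\<^sub>R x"
  have "norm u = 1" and "x = norm x *\<^sub>R u" using False by (simp_all add: u_def)
  then have "cinner (T x) x = cinner (norm x *\<^sub>R T u) (norm x *\<^sub>R u)"
    by (metis T.scaleR)
  then have "cmod (cinner (T x) x) = (norm x)\<^sup>2 * cmod (cinner (T u) u)"
    by (simp add: cinner_scaleR_left cinner_scaleR_right norm_mult power2_eq_square)
  then show ?thesis
    using mult_left_mono[OF unit[OF \<open>norm u = 1\<close>], of "(norm x)\<^sup>2"] by (simp add: mult.commute)
qed simp

lemma numrad_nonneg:
  fixes T :: "'a::complex_hilbert \<Rightarrow> 'a" and x :: 'a
  assumes "bounded_clinear_op T" and "x \<noteq> 0"
  shows "0 \<le> numrad T"
proof -
  have "0 \<le> numrad T * (norm x)\<^sup>2"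
    using norm_cinner_le_numrad[OF assms(1), of x] by (meson norm_ge_zero order_trans)
  then show ?thesis using assms(2) by (simp add: zero_le_mult_iff)
qed

lemma numrad_scale: "cmod c = 1 \<Longrightarrow> numrad (\<lambda>x. c *\<^sub>C T x) = numrad T"
  by (simp add: numrad_def cinner_scaleC_left norm_mult)

lemma norm_re_part_le:
  assumes T: "bounded_clinear_op T"
    and w: "\<And>z. cmod (cinner (T z) z) \<le> w * (norm z)\<^sup>2"
  shows "norm (re_part T x) \<le> w * norm x"
proof -
  interpret T: bounded_linear T by (rule bounded_clinear_op_imp_bounded_linear[OF T])
  interpret R: bounded_linear "re_part T" by (rule bounded_linear_re_part[OF T])
  \<comment> \<open>polarization: 4 Re <T1 x, y> = Re (<T (x+y), x+y> - <T (x-y), x-y>), each term bounded by w\<close>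
  have polar: "4 * Re (cinner (re_part T x) y) \<le> 2 * w * ((norm x)\<^sup>2 + (norm y)\<^sup>2)" for y
  proof -
    define q1 where "q1 = cinner (T (x + y)) (x + y)"
    define q2 where "q2 = cinner (T (x - y)) (x - y)"
    have "4 * Re (cinner (re_part T x) y) = Re (cinner (T x) y + cinner (T y) x) * 2"
      using cinner_commute[of x "T y"]
      by (simp add: re_part_eq_scaleR cinner_scaleR_left cinner_add_left
          cinner_cadjoint_left[OF T])
    also have "\<dots> = Re (q1 - q2)"
      by (simp add: q1_def q2_def T.add T.diff cinner_add_left cinner_add_right
          cinner_diff_left cinner_diff_right)
    also have "\<dots> \<le> cmod q1 + cmod q2"
      using abs_Re_le_cmod[of q1] abs_Re_le_cmod[of q2] by simp
    also have "\<dots> \<le> w * (norm (x + y))\<^sup>2 + w * (norm (x - y))\<^sup>2"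
      unfolding q1_def q2_def by (intro add_mono w)
    also have "\<dots> = 2 * w * ((norm x)\<^sup>2 + (norm y)\<^sup>2)"
      by (simp add: norm_add_sq norm_diff_sq algebra_simps)
    finally show ?thesis .
  qed
  show ?thesis
  proof (cases "x = 0 \<or> re_part T x = 0")
    case True
    moreover have "0 \<le> w" if "x \<noteq> 0"
      using w[of x] that by (meson norm_ge_zero order_trans zero_le_mult_iff zero_less_power2 norm_eq_zero not_le)
    ultimately show ?thesis by (cases "x = 0") auto
  next
    case False
    define y where "y = (norm x / norm (re_part T x)) *\<^sub>R re_part T x"
    have "norm y = norm x" and "Re (cinner (re_part T x) y) = norm x * norm (re_part T x)"
      using False by (simp_all add: y_def cinner_scaleR_right cinner_self_norm power2_eq_square)
    then have "norm x * norm (re_part T x) \<le> norm x * (w * norm x)"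
      using polar[of y] by (simp add: power2_eq_square algebra_simps)
    then show ?thesis using False by simp
  qed
qed

lemma onorm_re_part_le_numrad:
  fixes T :: "'a::complex_hilbert \<Rightarrow> 'a" and x :: 'a
  assumes "bounded_clinear_op T" and "x \<noteq> 0"
  shows "onorm (re_part T) \<le> numrad T"
  by (intro onorm_bound numrad_nonneg[OF assms] norm_re_part_le[OF assms(1)]
      norm_cinner_le_numrad[OF assms(1)])

lemma onorm_im_part_le_numrad:
  fixes T :: "'a::complex_hilbert \<Rightarrow> 'a" and x :: 'a
  assumes "bounded_clinear_op T" and "x \<noteq> 0"
  shows "onorm (im_part T) \<le> numrad T"
  using onorm_re_part_le_numrad[OF bounded_clinear_op_scale[OF assms(1)] assms(2), of "- \<i>"]
  by (simp add: im_part_eq_re_part[OF assms(1)] numrad_scale)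

lemma norm_sq_add_norm_sq_cadjoint:
  fixes T :: "'a::complex_hilbert \<Rightarrow> 'a"
  shows "(norm (T x))\<^sup>2 + (norm (cadjoint T x))\<^sup>2
    = 2 * ((norm (re_part T x))\<^sup>2 + (norm (im_part T x))\<^sup>2)"
proof -
  have "(norm (T x + cadjoint T x))\<^sup>2 = 4 * (norm (re_part T x))\<^sup>2"
    by (simp add: re_part_def norm_scaleC power_divide)
  moreover have "(norm (T x - cadjoint T x))\<^sup>2 = 4 * (norm (im_part T x))\<^sup>2"
    by (simp add: im_part_def norm_scaleC norm_divide norm_mult power_mult_distrib power_divide)
  ultimately show ?thesis
    using norm_add_sq[of "T x" "cadjoint T x"] norm_diff_sq[of "T x" "cadjoint T x"] by argo
qed

lemma norm_sq_add_norm_sq_cadjoint_le: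
  fixes T :: "'a::complex_hilbert \<Rightarrow> 'a" and e :: 'a
  assumes T: "bounded_clinear_op T" and "e \<noteq> 0"
  shows "(norm (T x))\<^sup>2 + (norm (cadjoint T x))\<^sup>2 \<le> (2 * (numrad T)\<^sup>2 + D_op T) * (norm x)\<^sup>2"
proof -
  define p where "p = onorm (re_part T)"
  define q where "q = onorm (im_part T)"
  have "bounded_linear (re_part T)" and "bounded_linear (im_part T)"
    using bounded_linear_re_part[OF T] bounded_linear_re_part[OF bounded_clinear_op_scale[OF T]]
    by (simp_all add: im_part_eq_re_part[OF T])
  then have "(norm (re_part T x))\<^sup>2 \<le> (p * norm x)\<^sup>2" and "(norm (im_part T x))\<^sup>2 \<le> (q * norm x)\<^sup>2"
    unfolding p_def q_def by (intro power_mono onorm; simp)+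
  moreover have "p\<^sup>2 + q\<^sup>2 \<le> (numrad T)\<^sup>2 + min (p\<^sup>2) (q\<^sup>2)"
  proof -
    have "p\<^sup>2 \<le> (numrad T)\<^sup>2" and "q\<^sup>2 \<le> (numrad T)\<^sup>2"
      unfolding p_def q_def
      using onorm_re_part_le_numrad[OF assms] onorm_im_part_le_numrad[OF assms]
        \<open>bounded_linear (re_part T)\<close> \<open>bounded_linear (im_part T)\<close>
      by (simp_all add: power_mono onorm_pos_le)
    then show ?thesis by (simp add: min_def)
  qed
  then have "(p\<^sup>2 + q\<^sup>2) * (norm x)\<^sup>2 \<le> ((numrad T)\<^sup>2 + min (p\<^sup>2) (q\<^sup>2)) * (norm x)\<^sup>2"
    by (rule mult_right_mono) simp
  ultimately show ?thesis
    unfolding norm_sq_add_norm_sq_cadjoint D_op_def p_def[symmetric] q_def[symmetric]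
    by (simp add: power_mult_distrib algebra_simps)
qed

lemma alpha_op_le: "norm x = 1 \<Longrightarrow> alpha_op R \<le> (norm (R x))\<^sup>2"
  unfolding alpha_op_def by (rule cInf_lower) (auto intro: bdd_belowI[of _ 0])

lemma onorm_le_unit_bound:
  fixes S :: "'a::real_normed_vector \<Rightarrow> 'b::real_normed_vector"
  assumes S: "bounded_linear S" and "0 \<le> B" and unit: "\<And>x. norm x = 1 \<Longrightarrow> norm (S x) \<le> B"
  shows "onorm S \<le> B"
proof (rule onorm_bound[OF \<open>0 \<le> B\<close>])
  interpret S: bounded_linear S by (rule S)
  fix x :: 'a
  show "norm (S x) \<le> B * norm x"
  proof (cases "x = 0")
    case False
    then have "S x = norm x *\<^sub>R S (inverse (norm x) *\<^sub>R x)"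
      by (simp flip: S.scaleR)
    then show ?thesis
      using unit[of "inverse (norm x) *\<^sub>R x"] False by (simp add: mult.commute mult_left_mono)
  qed simp
qed

lemma onorm_sq_add_alpha_op_le:
  fixes S R :: "'a::complex_hilbert \<Rightarrow> 'a" and e :: 'a
  assumes "bounded_linear S" and "e \<noteq> 0"
    and bound: "\<And>x. (norm (S x))\<^sup>2 + (norm (R x))\<^sup>2 \<le> M * (norm x)\<^sup>2"
  shows "(onorm S)\<^sup>2 + alpha_op R \<le> M"
proof -
  have unit: "(norm (S x))\<^sup>2 \<le> M - alpha_op R" if "norm x = 1" for x
    using bound[of x] alpha_op_le[OF that, of R] that by simp
  then have "0 \<le> M - alpha_op R"
    using \<open>e \<noteq> 0\<close> unit[of "inverse (norm e) *\<^sub>R e"] by (meson order_trans zero_le_power2 norm_sgn sgn_div_norm)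
  then have "onorm S \<le> sqrt (M - alpha_op R)"
    by (intro onorm_le_unit_bound \<open>bounded_linear S\<close> real_le_rsqrt unit) simp_all
  then have "(onorm S)\<^sup>2 \<le> M - alpha_op R"
    using \<open>0 \<le> M - alpha_op R\<close> onorm_pos_le[OF \<open>bounded_linear S\<close>]
    by (metis power_mono real_sqrt_pow2)
  then show ?thesis by simp
qed

theorem theorem2p1:
  fixes T :: "'a::complex_hilbert \<Rightarrow> 'a"
  assumes "\<exists>x::'a. x \<noteq> 0"
    and "bounded_clinear_op T"
  shows "(onorm T)\<^sup>2 + max (alpha_op T) (alpha_op (cadjoint T))
           \<le> 2 * (numrad T)\<^sup>2 + D_op T"
proof -
  obtain e :: 'a where "e \<noteq> 0" using assms(1) by blast
  note bound = norm_sq_add_norm_sq_cadjoint_le[OF assms(2) \<open>e \<noteq> 0\<close>]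
  have "(onorm T)\<^sup>2 + alpha_op (cadjoint T) \<le> 2 * (numrad T)\<^sup>2 + D_op T"
    by (rule onorm_sq_add_alpha_op_le[OF _ \<open>e \<noteq> 0\<close> bound])
      (rule bounded_clinear_op_imp_bounded_linear[OF assms(2)])
  moreover have "(onorm (cadjoint T))\<^sup>2 + alpha_op T \<le> 2 * (numrad T)\<^sup>2 + D_op T"
    using bound
    by (intro onorm_sq_add_alpha_op_le[OF _ \<open>e \<noteq> 0\<close>] bounded_clinear_op_imp_bounded_linear
        bounded_clinear_op_cadjoint assms(2)) (simp add: add.commute)
  ultimately show ?thesis
    by (simp add: onorm_cadjoint[OF assms(2)])
qed

end
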